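(* Fix $\delta>0$ and an integer $J\ge1$. For each group $g$ let $\mathcal K_{g,\mathrm{fb}}\subseteq\mathcal K_g$ (feedback users) and $\mathcal K_{g,\mathrm{vir}}=(\mathcal K_g\setminus\mathcal K_{g,\mathrm{fb}})\times\{1,\dots,J\}$ (virtual users), with given vectors $\mathbf h_k^{(j)}\in\mathbb C^{MB}$ for $(k,j)\in\mathcal K_{g,\mathrm{vir}}$. Let (R-PF) be the problem: maximize $\alpha$ over $\{\mathbf Q_g\}\in\mathcal Q$, $\{R_g\}$, $\{s_k\}_{k\in\mathcal K_{g,\mathrm{fb}}}$, $\{t_{k,j}\}_{(k,j)\in\mathcal K_{g,\mathrm{vir}}}$, $\alpha$, subject to, for all $g$: $\begin{pmatrix}R_g&\alpha\sqrt{\tau_g|\mathcal K_g|}\\ \alpha\sqrt{\tau_g|\mathcal K_g|}&\sum_{k\in\mathcal K_{g,\mathrm{fb}}}s_k+\frac1J\sum_{(k,j)\in\mathcal K_{g,\mathrm{vir}}}t_{k,j}\end{pmatrix}\succeq\mathbf 0$; $r_k(\{\mathbf Q_\ell\})+\delta^{-1}(1-s_k)\ge R_g$ for $k\in\mathcal K_{g,\mathrm{fb}}$; $r_{k,j}(\{\mathbf Q_\ell\})+\delta^{-1}(1-t_{k,j})\ge R_g$ for $(k,j)\in\mathcal K_{g,\mathrm{vir}}$; $0\le s_k\le1$, $0\le t_{k,j}\le1$. Consider the algorithm that starts from any $\{\tilde{\mathbf Q}_\ell\}\in\mathcal Q$ and at each iteration solves the convex problem obtained from (R-PF) by replacing $r_k$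 with $\bar r_k(\cdot\mid\{\tilde{\mathbf Q}_\ell\})$ and $r_{k,j}$ with $\bar r_{k,j}(\cdot\mid\{\tilde{\mathbf Q}_\ell\})$, then sets $\tilde{\mathbf Q}_\ell$ equal to the obtained $\mathbf Q_\ell$ and repeats. Then every limit point of the iterates $(\{\mathbf Q_g\},\{R_g\},\alpha,\{s_k\},\{t_{k,j}\})$ generated by this algorithm is a stationary point of (R-PF).
   Context: Setting: $B$ BSs with $M$ antennas, powers $P_b\ge0$; users partitioned into groups $\mathcal K_1,\dots,\mathcal K_G$; $\mathcal B_g$ the BSs serving group $g$; weights $\tau_g>0$; $\mathbf h_k\in\mathbb C^{MB}$ the stacked channel of user $k$. $\mathcal Q$: tuples of Hermitian PSD $MB\times MB$ matrices $(\mathbf Q_1,\dots,\mathbf Q_G)$ with $\sum_g\mathrm{tr}(\{\mathbf Q_g\}_{b,b})\le P_b$ for all $b$ ($\{\cdot\}_{b,b'}$ the $(b,b')$-th $M\times M$ block) and $\{\mathbf Q_g\}_{b,b'}=\mathbf 0$ if $b\notin\mathcal B_g$ or $b'\notin\mathcal B_g$. For a vector $\mathbf h$ and user of group $g$ define $\rho_g(\mathbf h;\{\mathbf Q_\ell\})=\log_2\big(1+\frac{\mathrm{tr}(\mathbf Q_g\mathbf h\mathbf h^H)}{\sum_{\ell\ne g}\mathrm{tr}(\mathbf Q_\ell\mathbf h\mathbf h^H)+1}\big)$ and $\bar\rho_g(\mathbf h;\{\mathbf Q_\ell\}\mid\{\tilde{\mathbf Q}_\ell\})=\log_2(1+\sum_{\ell=1}^G\mathrm{tr}(\mathbf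 Q_\ell\mathbf h\mathbf h^H))-\log_2(1+\sum_{\ell\ne g}\mathrm{tr}(\tilde{\mathbf Q}_\ell\mathbf h\mathbf h^H))-\frac{\sum_{\ell\ne g}\mathrm{tr}((\mathbf Q_\ell-\tilde{\mathbf Q}_\ell)\mathbf h\mathbf h^H)}{[1+\sum_{\ell\ne g}\mathrm{tr}(\tilde{\mathbf Q}_\ell\mathbf h\mathbf h^H)]\ln2}$. Then $r_k=\rho_g(\mathbf h_k;\cdot)$, $\bar r_k=\bar\rho_g(\mathbf h_k;\cdot\mid\cdot)$, $r_{k,j}=\rho_g(\mathbf h_k^{(j)};\cdot)$, $\bar r_{k,j}=\bar\rho_g(\mathbf h_k^{(j)};\cdot\mid\cdot)$ for $k\in\mathcal K_g$. A stationary point is a feasible point at which no feasible direction has positive directional derivative of the (max-min reformulated) objective. *)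

theory Defs
  imports "HOL-Analysis.Analysis"
begin

text \<open>
  BSs are indexed by a finite type 'b (B = CARD('b)), antennas by a finite type 'm
  (M = CARD('m)); the stacked space C^(MB) is complex^('m \<times> 'b), the entry (m,b)
  being antenna m of BS b.  Hence the (b,b')-th M x M block of an MB x MB matrix Q
  is (\<lambda>m m'. Q $ (m,b) $ (m',b')).
  Groups are indexed by a finite type 'g, users by a finite type 'k, the group of a
  user is grp k, so K_g = {k. grp k = g}.  The virtual-user copies j = 1..J are
  indexed by a finite type 'j (J = CARD('j) \<ge> 1).
  fb is the set of feedback users (K_{g,fb} = fb \<inter> K_g); a user k \<notin> fb
  of group g gives the virtual users (k,j) \<in> K_{g,vir}.
\<close>

type_synonym ('m,'b) cvec = "complex ^ ('m \<times> 'b)"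
type_synonym ('m,'b) cmat = "complex ^ ('m \<times> 'b) ^ ('m \<times> 'b)"

definition hermitian :: "('m::finite,'b::finite) cmat \<Rightarrow> bool" where
  "hermitian Q \<longleftrightarrow> (\<forall>i j. Q $ i $ j = cnj (Q $ j $ i))"

definition qform :: "('m::finite,'b::finite) cmat \<Rightarrow> ('m,'b) cvec \<Rightarrow> complex" where
  "qform Q v = (\<Sum>i\<in>UNIV. \<Sum>j\<in>UNIV. cnj (v $ i) * Q $ i $ j * v $ j)"

definition psd :: "('m::finite,'b::finite) cmat \<Rightarrow> bool" where
  "psd Q \<longleftrightarrow> hermitian Q \<and> (\<forall>v. qform Q v \<in> \<real> \<and> 0 \<le> Re (qform Q v))"

text \<open>tr(Q h h^H) = h^H Q h (real for Hermitian Q; we take the real part)\<close>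
definition trQh :: "('m::finite,'b::finite) cmat \<Rightarrow> ('m,'b) cvec \<Rightarrow> real" where
  "trQh Q h = Re (\<Sum>i\<in>UNIV. \<Sum>j\<in>UNIV. Q $ i $ j * h $ j * cnj (h $ i))"

definition blocktr :: "('m::finite,'b::finite) cmat \<Rightarrow> 'b \<Rightarrow> real" where
  "blocktr Q b = Re (\<Sum>m\<in>UNIV. Q $ (m,b) $ (m,b))"

definition Qset :: "('b::finite \<Rightarrow> real) \<Rightarrow> ('g::finite \<Rightarrow> 'b set)
                    \<Rightarrow> ('g \<Rightarrow> ('m::finite,'b) cmat) set" where
  "Qset P Bs = {Q. (\<forall>g. psd (Q g))
                 \<and> (\<forall>b. (\<Sum>g\<in>UNIV. blocktr (Q g) b) \<le> P b)
                 \<and> (\<forall>g m b m' b'. (b \<notin> Bs g \<or> b' \<notin> Bs g) \<longrightarrow> Q g $ (m,b) $ (m',b') = 0)}"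

definition rho :: "'g::finite \<Rightarrow> ('m::finite,'b::finite) cvec \<Rightarrow> ('g \<Rightarrow> ('m,'b) cmat) \<Rightarrow> real" where
  "rho g h Q = log 2 (1 + trQh (Q g) h / ((\<Sum>l\<in>UNIV - {g}. trQh (Q l) h) + 1))"

definition rhobar :: "'g::finite \<Rightarrow> ('m::finite,'b::finite) cvec \<Rightarrow> ('g \<Rightarrow> ('m,'b) cmat)
                      \<Rightarrow> ('g \<Rightarrow> ('m,'b) cmat) \<Rightarrow> real" where
  "rhobar g h Q Qt =
     log 2 (1 + (\<Sum>l\<in>UNIV. trQh (Q l) h))
     - log 2 (1 + (\<Sum>l\<in>UNIV - {g}. trQh (Qt l) h))
     - (\<Sum>l\<in>UNIV - {g}. trQh (Q l - Qt l) h)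
         / ((1 + (\<Sum>l\<in>UNIV - {g}. trQh (Qt l) h)) * ln 2)"

definition psd2 :: "real \<Rightarrow> real \<Rightarrow> real \<Rightarrow> bool" where
  "psd2 a b c \<longleftrightarrow> (\<forall>x y. 0 \<le> a * x\<^sup>2 + 2 * b * x * y + c * y\<^sup>2)"

text \<open>The variables
  s_k exist only for feedback users and t_{k,j} only for non-feedback users; the
  unused coordinates are pinned to 0 in the feasible set.\<close>
type_synonym ('g,'m,'b,'k,'j) pt =
  "('g \<Rightarrow> ('m,'b) cmat) \<times> ('g \<Rightarrow> real) \<times> ('k \<Rightarrow> real) \<times> ('k \<Rightarrow> 'j \<Rightarrow> real) \<times> real"

definition feas ::
  "('b::finite \<Rightarrow> real) \<Rightarrow> ('g::finite \<Rightarrow> 'b set) \<Rightarrow> ('g \<Rightarrow> real) \<Rightarrow> ('k::finite \<Rightarrow> 'g)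
   \<Rightarrow> 'k set \<Rightarrow> real
   \<Rightarrow> ('k \<Rightarrow> ('g \<Rightarrow> ('m::finite,'b) cmat) \<Rightarrow> real)
   \<Rightarrow> ('k \<Rightarrow> 'j::finite \<Rightarrow> ('g \<Rightarrow> ('m,'b) cmat) \<Rightarrow> real)
   \<Rightarrow> ('g,'m,'b,'k,'j) pt set" where
  "feas P Bs tau grp fb delta rfb rvir =
     {(Q, R, s, t, alpha).
        Q \<in> Qset P Bs
      \<and> (\<forall>g. psd2 (R g) (alpha * sqrt (tau g * real (card {k. grp k = g})))
                  ((\<Sum>k\<in>{k\<in>fb. grp k = g}. s k)
                   + (1 / real CARD('j)) * (\<Sum>k\<in>{k. k \<notin> fb \<and> grp k = g}. \<Sum>j\<in>UNIV. t k j)))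
      \<and> (\<forall>k\<in>fb. rfb k Q + (1 - s k) / delta \<ge> R (grp k))
      \<and> (\<forall>k j. k \<notin> fb \<longrightarrow> rvir k j Q + (1 - t k j) / delta \<ge> R (grp k))
      \<and> (\<forall>k\<in>fb. 0 \<le> s k \<and> s k \<le> 1)
      \<and> (\<forall>k j. k \<notin> fb \<longrightarrow> 0 \<le> t k j \<and> t k j \<le> 1)
      \<and> (\<forall>k. k \<notin> fb \<longrightarrow> s k = 0)
      \<and> (\<forall>k j. k \<in> fb \<longrightarrow> t k j = 0)}"

definition feas_RPF where
  "feas_RPF P Bs tau grp fb delta h hv =
     feas P Bs tau grp fb delta (\<lambda>k Q. rho (grp k) (h k) Q) (\<lambda>k j Q. rho (grp k) (hv k j) Q)"

definition feas_surr where
  "feas_surr P Bs tau grp fb delta h hv Qt =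
     feas P Bs tau grp fb delta (\<lambda>k Q. rhobar (grp k) (h k) Q Qt)
                                (\<lambda>k j Q. rhobar (grp k) (hv k j) Q Qt)"

definition obj :: "('g,'m,'b,'k,'j) pt \<Rightarrow> real" where
  "obj x = snd (snd (snd (snd x)))"

definition optimal_in :: "('g,'m::finite,'b::finite,'k,'j) pt set \<Rightarrow> ('g,'m,'b,'k,'j) pt \<Rightarrow> bool" where
  "optimal_in F x \<longleftrightarrow> x \<in> F \<and> (\<forall>y\<in>F. obj y \<le> obj x)"

definition pstep :: "('g,'m::finite,'b::finite,'k,'j) pt \<Rightarrow> real \<Rightarrow> ('g,'m,'b,'k,'j) pt
                     \<Rightarrow> ('g,'m,'b,'k,'j) pt" where
  "pstep x \<tau> d = (case x of (Q, R, s, t, a) \<Rightarrow> case d of (dQ, dR, ds, dt, da) \<Rightarrow>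
      ((\<lambda>g. Q g + \<tau> *\<^sub>R dQ g), (\<lambda>g. R g + \<tau> * dR g), (\<lambda>k. s k + \<tau> * ds k),
       (\<lambda>k j. t k j + \<tau> * dt k j), a + \<tau> * da))"

definition feasible_direction where
  "feasible_direction F x d \<longleftrightarrow> (\<exists>\<epsilon>>0. \<forall>\<tau>. 0 < \<tau> \<and> \<tau> \<le> \<epsilon> \<longrightarrow> pstep x \<tau> d \<in> F)"

definition stationary where
  "stationary F x \<longleftrightarrow> x \<in> F \<and>
     \<not> (\<exists>d D. feasible_direction F x d
              \<and> ((\<lambda>\<tau>. (obj (pstep x \<tau> d) - obj x) / \<tau>) \<longlongrightarrow> D) (at_right 0) \<and> D > 0)"

definition limit_point :: "(nat \<Rightarrow> 'a::topological_space) \<Rightarrow> 'a \<Rightarrow> bool" where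
  "limit_point z x \<longleftrightarrow> (\<exists>\<sigma>. strict_mono \<sigma> \<and> (z \<circ> \<sigma>) \<longlonglongrightarrow> x)"

end

theory Submission
  imports Defs
begin

text \<open>
  Writing the interference at a user as \<open>I(Q)\<close>, the surrogate \<open>\<rho>\<^bsub>g\<^esub>(\<cdot> | Q\<^sup>~)\<close> replaces
  the subtracted concave term \<open>log(1 + I(Q))\<close> of the true rate by its tangent at \<open>Q\<^sup>~\<close>.  Hence it is a
  minorant of the true rate, exact at \<open>Q = Q\<^sup>~\<close>, and the error is at most
  \<open>(I(Q) - I(Q\<^sup>~))\<^sup>2 / ln 2\<close>.  Consequently every iterate is feasible for (R-PF), the
  objective values \<open>\<alpha>\<close> increase, and a limit point \<open>x\<close> is feasible (by closedness) with an
  \<open>\<alpha>\<close> bounding those of all iterates.  If a feasible direction \<open>d\<close> at \<open>x\<close> increased \<open>\<alpha>\<close>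
  at rate \<open>d\<^sub>\<alpha> > 0\<close>, then for small \<open>\<tau>\<close> the point \<open>x + \<tau> d\<close>, with rate targets and \<open>\<alpha>\<close>
  shrunk by a factor \<open>1 - O(\<tau>)\<close>, would be feasible for the surrogate problem at any
  iterate close enough to \<open>x\<close>: shrinking frees a rate margin of order \<open>\<tau>\<close>, while
  the surrogate error there tends to \<open>O(\<tau>\<^sup>2)\<close>.  Its objective \<open>\<alpha>(x) + \<tau> d\<^sub>\<alpha>/2\<close> would
  beat the next iterate, contradicting the bound by \<open>\<alpha>(x)\<close>.
\<close>

lemma trQh_add_scaleR: "trQh (A + c *\<^sub>R B) v = trQh A v + c * trQh B v"
  unfolding trQh_def
  by (simp only: vector_add_component vector_scaleR_component)
     (simp add: scaleR_conv_of_real algebra_simps sum.distrib sum_distrib_left)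

lemma trQh_diff: "trQh (A - B) v = trQh A v - trQh B v"
  unfolding trQh_def by (simp add: algebra_simps sum_subtractf)

lemma trQh_eq_Re_qform: "trQh Q v = Re (qform Q v)"
  unfolding trQh_def qform_def by (simp add: mult.commute mult.left_commute)

lemma trQh_nonneg: "psd Q \<Longrightarrow> 0 \<le> trQh Q v"
  unfolding psd_def trQh_eq_Re_qform by simp

lemma Qset_trQh_nonneg: "Q \<in> Qset P Bs \<Longrightarrow> 0 \<le> trQh (Q l) v"
  unfolding Qset_def by (auto intro: trQh_nonneg)

lemma trQh_tendsto: "(Qs \<longlongrightarrow> Q) F \<Longrightarrow> ((\<lambda>n. trQh (Qs n) v) \<longlongrightarrow> trQh Q v) F"
  unfolding trQh_def by (intro tendsto_intros)

definition interference ::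
    "('g::finite \<Rightarrow> ('m::finite,'b::finite) cmat) \<Rightarrow> 'g \<Rightarrow> ('m,'b) cvec \<Rightarrow> real" where
  "interference Q g v = (\<Sum>l\<in>UNIV - {g}. trQh (Q l) v)"

lemma interference_nonneg: "Q \<in> Qset P Bs \<Longrightarrow> 0 \<le> interference Q g v"
  unfolding interference_def by (auto intro!: sum_nonneg Qset_trQh_nonneg)

lemma interference_add_scaleR:
  "interference (\<lambda>l. A l + c *\<^sub>R B l) g v = interference A g v + c * interference B g v"
  unfolding interference_def trQh_add_scaleR by (simp add: sum.distrib sum_distrib_left)

lemma interference_tendsto:
  "(\<And>l. ((\<lambda>n. Qs n l) \<longlongrightarrow> Q l) F) \<Longrightarrow>
    ((\<lambda>n. interference (Qs n) g v) \<longlongrightarrow> interference Q g v) F"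
  unfolding interference_def by (intro tendsto_intros trQh_tendsto)

lemma rho_eq: "rho g v Q = log 2 (1 + trQh (Q g) v / (interference Q g v + 1))"
  unfolding rho_def interference_def ..

lemma rhobar_eq:
  "rhobar g v Q Qt =
     log 2 (1 + (trQh (Q g) v + interference Q g v)) - log 2 (1 + interference Qt g v)
     - (interference Q g v - interference Qt g v) / ((1 + interference Qt g v) * ln 2)"
proof -
  have "(\<Sum>l\<in>UNIV. trQh (Q l) v) = trQh (Q g) v + interference Q g v"
    unfolding interference_def by (rule sum.remove) auto
  moreover have "(\<Sum>l\<in>UNIV - {g}. trQh (Q l - Qt l) v) = interference Q g v - interference Qt g v"
    unfolding interference_def trQh_diff by (rule sum_subtractf)
  ultimately show ?thesis unfolding rhobar_def interference_def by simp
qed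

lemma ln_linearization_bounds:
  fixes I J :: real
  assumes "0 \<le> I" "0 \<le> J"
  shows "0 \<le> ln (1 + J) - ln (1 + I) + (I - J) / (1 + J)"
    and "ln (1 + J) - ln (1 + I) + (I - J) / (1 + J) \<le> (I - J)\<^sup>2"
proof -
  have lower: "ln (1 + I) - ln (1 + J) \<le> (I - J) / (1 + J)"
    using ln_le_minus_one[of "(1 + I) / (1 + J)"] assms by (simp add: ln_div field_simps)
  have upper: "ln (1 + J) - ln (1 + I) \<le> (J - I) / (1 + I)"
    using ln_le_minus_one[of "(1 + J) / (1 + I)"] assms by (simp add: ln_div field_simps)
  show "0 \<le> ln (1 + J) - ln (1 + I) + (I - J) / (1 + J)"
    using lower by simp
  have "(J - I) / (1 + I) + (I - J) / (1 + J) = (I - J)\<^sup>2 / ((1 + I) * (1 + J))"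
    using assms by (simp add: field_simps power2_eq_square)
  also have "\<dots> \<le> (I - J)\<^sup>2"
  proof -
    have "1 \<le> (1 + I) * (1 + J)" using assms by (simp add: algebra_simps)
    then show ?thesis by (simp add: divide_le_eq mult_le_cancel_left1)
  qed
  finally show "ln (1 + J) - ln (1 + I) + (I - J) / (1 + J) \<le> (I - J)\<^sup>2"
    using upper by linarith
qed

lemma rho_minus_rhobar:
  fixes g :: "'g::finite" and v :: "('m::finite,'b::finite) cvec"
  assumes "Q \<in> Qset P Bs" "Qt \<in> Qset P' Bs'"
  defines "I \<equiv> interference Q g v" and "J \<equiv> interference Qt g v"
  shows "rho g v Q - rhobar g v Q Qt = (ln (1 + J) - ln (1 + I) + (I - J) / (1 + J)) / ln 2"
proof -
  define q where "q = trQh (Q g) v"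
  have "0 \<le> q" "0 \<le> I" "0 \<le> J"
    using assms(1,2) unfolding q_def I_def J_def by (auto intro: Qset_trQh_nonneg interference_nonneg)
  then have "1 + q / (I + 1) = (1 + (q + I)) / (1 + I)"
    by (simp add: field_simps)
  then have rho: "rho g v Q = (ln (1 + (q + I)) - ln (1 + I)) / ln 2"
    using \<open>0 \<le> q\<close> \<open>0 \<le> I\<close> unfolding rho_eq q_def[symmetric] I_def[symmetric] log_def
    by (simp add: ln_div)
  have rhobar: "rhobar g v Q Qt = (ln (1 + (q + I)) - ln (1 + J) - (I - J) / (1 + J)) / ln 2"
    unfolding rhobar_eq q_def[symmetric] I_def[symmetric] J_def[symmetric] log_def
    by (simp add: diff_divide_distrib)
  show ?thesis
    unfolding rho rhobar diff_divide_distrib[symmetric] by (simp add: algebra_simps)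
qed

lemma rhobar_le_rho:
  assumes "Q \<in> Qset P Bs" "Qt \<in> Qset P' Bs'"
  shows "rhobar g v Q Qt \<le> rho g v Q"
proof -
  have "0 \<le> rho g v Q - rhobar g v Q Qt"
    unfolding rho_minus_rhobar[OF assms]
    by (intro divide_nonneg_pos ln_linearization_bounds
        interference_nonneg[OF assms(1)] interference_nonneg[OF assms(2)]) simp
  then show ?thesis by simp
qed

lemma rho_minus_rhobar_le:
  assumes "Q \<in> Qset P Bs" "Qt \<in> Qset P' Bs'"
  shows "rho g v Q - rhobar g v Q Qt \<le> (interference Q g v - interference Qt g v)\<^sup>2 / ln 2"
  unfolding rho_minus_rhobar[OF assms]
  by (intro divide_right_mono ln_linearization_bounds
      interference_nonneg[OF assms(1)] interference_nonneg[OF assms(2)]) simp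

lemma rhobar_self: "Q \<in> Qset P Bs \<Longrightarrow> rhobar g v Q Q = rho g v Q"
  using rho_minus_rhobar[of Q P Bs Q P Bs g v] by simp

lemma rho_nonneg:
  assumes "Q \<in> Qset P Bs"
  shows "0 \<le> rho g v Q"
proof -
  have "0 \<le> trQh (Q g) v / (interference Q g v + 1)"
    using Qset_trQh_nonneg[OF assms] interference_nonneg[OF assms] by simp
  then show ?thesis unfolding rho_eq by simp
qed

lemma rho_tendsto:
  assumes "Q \<in> Qset P Bs" "\<And>l. ((\<lambda>n. Qs n l) \<longlongrightarrow> Q l) F"
  shows "((\<lambda>n. rho g v (Qs n)) \<longlongrightarrow> rho g v Q) F"
  unfolding rho_eq
proof (intro tendsto_intros trQh_tendsto interference_tendsto assms(2))
  have "0 \<le> trQh (Q g) v" "0 \<le> interference Q g v"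
    using assms(1) by (auto intro: Qset_trQh_nonneg interference_nonneg)
  then show "1 + trQh (Q g) v / (interference Q g v + 1) \<noteq> 0" "interference Q g v + 1 \<noteq> 0"
    by (auto simp: add_nonneg_eq_0_iff)
qed auto

lemma psd2_diag_nonneg:
  assumes "psd2 R b S"
  shows "0 \<le> R" and "0 \<le> S"
  using assms[unfolded psd2_def, rule_format, of 1 0] assms[unfolded psd2_def, rule_format, of 0 1]
  by simp_all

lemma psd2_shrink:
  assumes "psd2 R b S" "0 \<le> c" "c \<le> 1"
  shows "psd2 (c * R) (c * b) S"
  unfolding psd2_def
proof (intro allI)
  fix x y :: real
  have "0 \<le> c * (R * x\<^sup>2 + 2 * b * x * y + S * y\<^sup>2) + (1 - c) * (S * y\<^sup>2)"
    using assms psd2_diag_nonneg(2)[OF assms(1)] unfolding psd2_def by simp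
  then show "0 \<le> c * R * x\<^sup>2 + 2 * (c * b) * x * y + S * y\<^sup>2"
    by (simp add: algebra_simps)
qed

lemma psd2I:
  assumes "0 \<le> R" "0 \<le> S" "b\<^sup>2 \<le> R * S"
  shows "psd2 R b S"
  unfolding psd2_def
proof (intro allI)
  fix x y :: real
  show "0 \<le> R * x\<^sup>2 + 2 * b * x * y + S * y\<^sup>2"
  proof (cases "R = 0")
    case True
    then show ?thesis using assms by simp
  next
    case False
    have "R * (R * x\<^sup>2 + 2 * b * x * y + S * y\<^sup>2) = (R * x + b * y)\<^sup>2 + (R * S - b\<^sup>2) * y\<^sup>2"
      by (simp add: power2_eq_square algebra_simps)
    also have "0 \<le> \<dots>" using assms(3) by simp
    finally show ?thesis
      using False assms(1) by (simp add: zero_le_mult_iff)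
  qed
qed

lemma psd2_offdiag_nonzero_imp_pos:
  assumes "psd2 R b S" "b \<noteq> 0"
  shows "0 < R"
proof (rule ccontr)
  assume "\<not> 0 < R"
  then have "R = 0" using psd2_diag_nonneg(1)[OF assms(1)] by simp
  then have "0 \<le> 2 * b * (- (S + 1) / b) + S"
    using assms(1)[unfolded psd2_def, rule_format, of "- (S + 1) / b" 1] by simp
  also have "\<dots> = - S - 2" using assms(2) by (simp add: field_simps)
  finally show False using psd2_diag_nonneg(2)[OF assms(1)] by simp
qed

lemma psd2_tendsto:
  assumes "(Rs \<longlongrightarrow> R) F" "(bs \<longlongrightarrow> b) F" "(Ss \<longlongrightarrow> S) F"
    and "\<forall>\<^sub>F n in F. psd2 (Rs n) (bs n) (Ss n)" "F \<noteq> bot"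
  shows "psd2 R b S"
  unfolding psd2_def
proof (intro allI)
  fix x y :: real
  have "((\<lambda>n. Rs n * x\<^sup>2 + 2 * bs n * x * y + Ss n * y\<^sup>2) \<longlongrightarrow> R * x\<^sup>2 + 2 * b * x * y + S * y\<^sup>2) F"
    using assms(1-3) by (intro tendsto_intros)
  then show "0 \<le> R * x\<^sup>2 + 2 * b * x * y + S * y\<^sup>2"
    by (rule tendsto_lowerbound)
       (use assms(4,5) in \<open>auto simp: psd2_def elim: eventually_mono\<close>)
qed

lemma Qset_closed:
  assumes Qs: "\<forall>\<^sub>F n in F. Qs n \<in> Qset P Bs" and lim: "\<And>g. ((\<lambda>n. Qs n g) \<longlongrightarrow> Q g) F"
    and F: "F \<noteq> bot"
  shows "Q \<in> Qset P Bs"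
proof -
  have entry: "((\<lambda>n. Qs n g $ i $ j) \<longlongrightarrow> Q g $ i $ j) F" for g i j
    by (intro tendsto_intros lim)
  have hermitian: "hermitian (Q g)" for g
    unfolding hermitian_def
  proof (intro allI)
    fix i j
    have "((\<lambda>n. cnj (Qs n g $ j $ i)) \<longlongrightarrow> cnj (Q g $ j $ i)) F"
      by (intro tendsto_intros entry)
    moreover have "\<forall>\<^sub>F n in F. cnj (Qs n g $ j $ i) = Qs n g $ i $ j"
      using Qs
    proof eventually_elim
      case (elim n)
      then have "hermitian (Qs n g)" by (simp add: Qset_def psd_def)
      then show ?case unfolding hermitian_def by (metis complex_cnj_cnj)
    qed
    ultimately have "((\<lambda>n. Qs n g $ i $ j) \<longlongrightarrow> cnj (Q g $ j $ i)) F"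
      by (rule Lim_transform_eventually)
    then show "Q g $ i $ j = cnj (Q g $ j $ i)"
      using tendsto_unique[OF F entry] by blast
  qed
  have qform: "qform (Q g) v \<in> \<real> \<and> 0 \<le> Re (qform (Q g) v)" for g v
  proof
    have "((\<lambda>n. qform (Qs n g) v) \<longlongrightarrow> qform (Q g) v) F"
      unfolding qform_def by (intro tendsto_intros lim)
    note Im = tendsto_Im[OF this] and Re = tendsto_Re[OF this]
    have "\<forall>\<^sub>F n in F. Im (qform (Qs n g) v) = 0"
      using Qs by eventually_elim (simp add: Qset_def psd_def complex_is_Real_iff)
    then have "Im (qform (Q g) v) = 0"
      using tendsto_unique[OF F Im tendsto_eventually] by blast
    then show "qform (Q g) v \<in> \<real>" by (simp add: complex_is_Real_iff)
    show "0 \<le> Re (qform (Q g) v)"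
      by (rule tendsto_lowerbound[OF Re _ F])
         (use Qs in \<open>eventually_elim, simp add: Qset_def psd_def\<close>)
  qed
  have power: "(\<Sum>g\<in>UNIV. blocktr (Q g) b) \<le> P b" for b
  proof (rule tendsto_upperbound[OF _ _ F])
    show "((\<lambda>n. \<Sum>g\<in>UNIV. blocktr (Qs n g) b) \<longlongrightarrow> (\<Sum>g\<in>UNIV. blocktr (Q g) b)) F"
      unfolding blocktr_def by (intro tendsto_intros lim)
    show "\<forall>\<^sub>F n in F. (\<Sum>g\<in>UNIV. blocktr (Qs n g) b) \<le> P b"
      using Qs by eventually_elim (simp add: Qset_def)
  qed
  have zero: "Q g $ (m, b) $ (m', b') = 0" if "b \<notin> Bs g \<or> b' \<notin> Bs g" for g m b m' b'
  proof -
    have "\<forall>\<^sub>F n in F. Qs n g $ (m, b) $ (m', b') = 0"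
      using Qs by eventually_elim (use that in \<open>simp add: Qset_def\<close>)
    then show ?thesis using tendsto_unique[OF F entry tendsto_eventually] by blast
  qed
  show ?thesis
    unfolding Qset_def psd_def using hermitian qform power zero by auto
qed

lemma tendsto_fun_apply: "(f \<longlongrightarrow> l) F \<Longrightarrow> ((\<lambda>n. f n i) \<longlongrightarrow> l i) F"
  by (rule continuous_on_tendsto_compose[OF continuous_on_product_coordinates]) auto

lemma tendsto_pt_components:
  fixes zs :: "'a \<Rightarrow> ('g,'m::finite,'b::finite,'k,'j) pt"
  assumes "(zs \<longlongrightarrow> (Q, R, s, t, a)) F"
  shows "((\<lambda>n. fst (zs n) g) \<longlongrightarrow> Q g) F" "((\<lambda>n. fst (snd (zs n)) g) \<longlongrightarrow> R g) F"
    "((\<lambda>n. fst (snd (snd (zs n))) k) \<longlongrightarrow> s k) F"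
    "((\<lambda>n. fst (snd (snd (snd (zs n)))) k j) \<longlongrightarrow> t k j) F"
    "((\<lambda>n. snd (snd (snd (snd (zs n))))) \<longlongrightarrow> a) F"
  using tendsto_fun_apply[OF tendsto_fst[OF assms]]
    tendsto_fun_apply[OF tendsto_fst[OF tendsto_snd[OF assms]]]
    tendsto_fun_apply[OF tendsto_fst[OF tendsto_snd[OF tendsto_snd[OF assms]]]]
    tendsto_fun_apply[OF tendsto_fun_apply[OF
      tendsto_fst[OF tendsto_snd[OF tendsto_snd[OF tendsto_snd[OF assms]]]]]]
    tendsto_snd[OF tendsto_snd[OF tendsto_snd[OF tendsto_snd[OF assms]]]]
  by simp_all

lemma feas_closed:
  fixes ts :: "'a \<Rightarrow> 'k::finite \<Rightarrow> 'j::finite \<Rightarrow> real"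
  assumes feas: "\<forall>\<^sub>F n in F. (Qs n, Rs n, ss n, ts n, as n) \<in> feas P Bs tau grp fb delta rfb rvir"
    and lim: "((\<lambda>n. (Qs n, Rs n, ss n, ts n, as n)) \<longlongrightarrow> (Q, R, s, t, a)) F" and F: "F \<noteq> bot"
    and rfb: "\<And>k. ((\<lambda>n. rfb k (Qs n)) \<longlongrightarrow> rfb k Q) F"
    and rvir: "\<And>k j. ((\<lambda>n. rvir k j (Qs n)) \<longlongrightarrow> rvir k j Q) F"
  shows "(Q, R, s, t, a) \<in> feas P Bs tau grp fb delta rfb rvir"
proof -
  note lims = tendsto_pt_components[OF lim, simplified]
  note feas' = feas[unfolded feas_def mem_Collect_eq prod.case]
  have "Q \<in> Qset P Bs"
    by (rule Qset_closed[OF _ lims(1) F]) (use feas' in \<open>eventually_elim, blast\<close>)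
  moreover have "psd2 (R g) (a * sqrt (tau g * real (card {k. grp k = g})))
      ((\<Sum>k\<in>{k\<in>fb. grp k = g}. s k)
       + (1 / real CARD('j)) * (\<Sum>k\<in>{k. k \<notin> fb \<and> grp k = g}. \<Sum>j\<in>UNIV. t k j))" for g
  proof (rule psd2_tendsto[OF _ _ _ _ F])
    show "\<forall>\<^sub>F n in F. psd2 (Rs n g) (as n * sqrt (tau g * real (card {k. grp k = g})))
      ((\<Sum>k\<in>{k\<in>fb. grp k = g}. ss n k)
       + (1 / real CARD('j)) * (\<Sum>k\<in>{k. k \<notin> fb \<and> grp k = g}. \<Sum>j\<in>UNIV. ts n k j))"
      using feas' by eventually_elim blast
  qed (intro tendsto_intros lims)+
  moreover have "rfb k Q + (1 - s k) / delta \<ge> R (grp k)" if "k \<in> fb" for k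
  proof (rule tendsto_le[OF F])
    show "((\<lambda>n. rfb k (Qs n) + (1 - ss n k) / delta) \<longlongrightarrow> rfb k Q + (1 - s k) / delta) F"
      unfolding divide_inverse by (intro tendsto_intros rfb lims)
    show "\<forall>\<^sub>F n in F. Rs n (grp k) \<le> rfb k (Qs n) + (1 - ss n k) / delta"
      using feas' by eventually_elim (use that in blast)
  qed (rule lims)
  moreover have "rvir k j Q + (1 - t k j) / delta \<ge> R (grp k)" if "k \<notin> fb" for k j
  proof (rule tendsto_le[OF F])
    show "((\<lambda>n. rvir k j (Qs n) + (1 - ts n k j) / delta) \<longlongrightarrow> rvir k j Q + (1 - t k j) / delta) F"
      unfolding divide_inverse by (intro tendsto_intros rvir lims)
    show "\<forall>\<^sub>F n in F. Rs n (grp k) \<le> rvir k j (Qs n) + (1 - ts n k j) / delta"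
      using feas' by eventually_elim (use that in blast)
  qed (rule lims)
  moreover have "0 \<le> s k \<and> s k \<le> 1" if "k \<in> fb" for k
  proof -
    have ev: "\<forall>\<^sub>F n in F. 0 \<le> ss n k" "\<forall>\<^sub>F n in F. ss n k \<le> 1"
      using feas' by (eventually_elim, use that in blast)+
    show ?thesis
      using tendsto_lowerbound[OF lims(3) ev(1) F] tendsto_upperbound[OF lims(3) ev(2) F] by simp
  qed
  moreover have "0 \<le> t k j \<and> t k j \<le> 1" if "k \<notin> fb" for k j
  proof -
    have ev: "\<forall>\<^sub>F n in F. 0 \<le> ts n k j" "\<forall>\<^sub>F n in F. ts n k j \<le> 1"
      using feas' by (eventually_elim, use that in blast)+
    show ?thesis
      using tendsto_lowerbound[OF lims(4) ev(1) F] tendsto_upperbound[OF lims(4) ev(2) F] by simp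
  qed
  moreover have "s k = 0" if "k \<notin> fb" for k
  proof -
    have "\<forall>\<^sub>F n in F. ss n k = 0"
      using feas' by eventually_elim (use that in blast)
    then show ?thesis using tendsto_unique[OF F lims(3) tendsto_eventually] by blast
  qed
  moreover have "t k j = 0" if "k \<in> fb" for k j
  proof -
    have "\<forall>\<^sub>F n in F. ts n k j = 0"
      using feas' by eventually_elim (use that in blast)
    then show ?thesis using tendsto_unique[OF F lims(4) tendsto_eventually] by blast
  qed
  ultimately show ?thesis
    unfolding feas_def by simp
qed

lemma feas_RPF_closed:
  fixes zs :: "'a \<Rightarrow> ('g::finite,'m::finite,'b::finite,'k::finite,'j::finite) pt"
  assumes feas: "\<forall>\<^sub>F n in F. zs n \<in> feas_RPF P Bs tau grp fb delta h hv"
    and lim: "(zs \<longlongrightarrow> x) F" and F: "F \<noteq> bot"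
  shows "x \<in> feas_RPF P Bs tau grp fb delta h hv"
proof -
  obtain Q R s t a where x: "x = (Q, R, s, t, a)" by (cases x)
  define Qs Rs ss ts as where "Qs = fst \<circ> zs" and "Rs = fst \<circ> snd \<circ> zs"
    and "ss = fst \<circ> snd \<circ> snd \<circ> zs" and "ts = fst \<circ> snd \<circ> snd \<circ> snd \<circ> zs"
    and "as = snd \<circ> snd \<circ> snd \<circ> snd \<circ> zs"
  have zs: "zs = (\<lambda>n. (Qs n, Rs n, ss n, ts n, as n))"
    unfolding Qs_def Rs_def ss_def ts_def as_def by simp
  note feas = feas[unfolded zs] and lim = lim[unfolded zs x]
  have "Q \<in> Qset P Bs"
    by (rule Qset_closed[OF _ tendsto_pt_components(1)[OF lim, simplified] F])
       (use feas in \<open>eventually_elim, simp add: feas_RPF_def feas_def\<close>)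
  with feas lim F show ?thesis
    unfolding feas_RPF_def x
    by (intro feas_closed rho_tendsto) (auto intro: tendsto_pt_components(1)[OF lim, simplified])
qed

lemma feas_fst_in_Qset: "y \<in> feas P Bs tau grp fb delta rfb rvir \<Longrightarrow> fst y \<in> Qset P Bs"
  by (cases y) (simp add: feas_def)

lemma feas_shrink:
  fixes t :: "'k::finite \<Rightarrow> 'j::finite \<Rightarrow> real"
  assumes feas: "(Q, R, s, t, a) \<in> feas P Bs tau grp fb delta rfb rvir" and c: "0 \<le> c" "c \<le> 1"
    and fb_gap: "\<forall>k\<in>fb. rfb k Q - rfb' k Q \<le> (1 - c) * R (grp k)"
    and vir_gap: "\<forall>k j. k \<notin> fb \<longrightarrow> rvir k j Q - rvir' k j Q \<le> (1 - c) * R (grp k)"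
  shows "(Q, (\<lambda>g. c * R g), s, t, c * a) \<in> feas P Bs tau grp fb delta rfb' rvir'"
proof -
  note F = feas[unfolded feas_def mem_Collect_eq prod.case]
  have "psd2 (c * R g) (c * a * sqrt (tau g * real (card {k. grp k = g})))
      ((\<Sum>k\<in>{k\<in>fb. grp k = g}. s k)
       + (1 / real CARD('j)) * (\<Sum>k\<in>{k. k \<notin> fb \<and> grp k = g}. \<Sum>j\<in>UNIV. t k j))" for g
    using psd2_shrink[OF conjunct1[OF conjunct2[OF F], rule_format, of g] c] by (simp add: mult.assoc)
  moreover have "rfb' k Q + (1 - s k) / delta \<ge> c * R (grp k)" if "k \<in> fb" for k
  proof -
    have "R (grp k) \<le> rfb k Q + (1 - s k) / delta" "rfb k Q - rfb' k Q \<le> (1 - c) * R (grp k)"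
      using F fb_gap that by auto
    then show ?thesis by (simp add: algebra_simps)
  qed
  moreover have "rvir' k j Q + (1 - t k j) / delta \<ge> c * R (grp k)" if "k \<notin> fb" for k j
  proof -
    have "R (grp k) \<le> rvir k j Q + (1 - t k j) / delta" "rvir k j Q - rvir' k j Q \<le> (1 - c) * R (grp k)"
      using F vir_gap that by auto
    then show ?thesis by (simp add: algebra_simps)
  qed
  ultimately show ?thesis
    using F unfolding feas_def by simp
qed

lemma feas_mono_rates:
  fixes t :: "'k::finite \<Rightarrow> 'j::finite \<Rightarrow> real"
  assumes "(Q, R, s, t, a) \<in> feas P Bs tau grp fb delta rfb rvir"
    and "\<forall>k\<in>fb. rfb k Q \<le> rfb' k Q" and "\<forall>k j. k \<notin> fb \<longrightarrow> rvir k j Q \<le> rvir' k j Q"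
  shows "(Q, R, s, t, a) \<in> feas P Bs tau grp fb delta rfb' rvir'"
  using feas_shrink[OF assms(1), of 1 rfb' rvir'] assms(2,3) by simp

lemma card_group_split:
  fixes grp :: "'k::finite \<Rightarrow> 'g"
  shows "card {k. grp k = g} = card {k \<in> fb. grp k = g} + card {k. k \<notin> fb \<and> grp k = g}"
proof -
  have "{k. grp k = g} = {k \<in> fb. grp k = g} \<union> {k. k \<notin> fb \<and> grp k = g}" by auto
  then show ?thesis by (simp add: card_Un_disjoint disjoint_iff)
qed

lemma feas_surr_has_positive_point:
  assumes Qt: "Qt \<in> Qset P Bs" and tau: "\<forall>g. 0 < tau g" and delta: "0 < delta"
  shows "\<exists>p \<in> (feas_surr P Bs tau grp fb delta h hv Qt
              :: ('g::finite,'m::finite,'b::finite,'k::finite,'j::finite) pt set). 0 < obj p"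
proof -
  define T where "T = (\<Sum>g\<in>UNIV. tau g)"
  have tau_le_T: "tau g \<le> T" for g
    unfolding T_def using tau by (intro member_le_sum) (auto intro: less_imp_le)
  have T: "0 < T" using tau_le_T[of undefined] tau by (meson less_le_trans)
  define a where "a = 1 / (2 * sqrt (delta * T))"
  define s :: "'k \<Rightarrow> real" where "s k = (if k \<in> fb then 1/2 else 0)" for k
  define t :: "'k \<Rightarrow> 'j \<Rightarrow> real" where "t k j = (if k \<notin> fb then 1/2 else 0)" for k j
  have "psd2 (1 / (2 * delta)) (a * sqrt (tau g * real (card {k. grp k = g})))
     ((\<Sum>k\<in>{k\<in>fb. grp k = g}. s k)
       + (1 / real CARD('j)) * (\<Sum>k\<in>{k. k \<notin> fb \<and> grp k = g}. \<Sum>j\<in>UNIV. t k j))" for g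
  proof -
    have sum: "(\<Sum>k\<in>{k\<in>fb. grp k = g}. s k)
       + (1 / real CARD('j)) * (\<Sum>k\<in>{k. k \<notin> fb \<and> grp k = g}. \<Sum>j\<in>UNIV. t k j)
       = real (card {k. grp k = g}) / 2"
      unfolding s_def t_def card_group_split[of grp g fb] by simp
    have "(a * sqrt (tau g * real (card {k. grp k = g})))\<^sup>2 = tau g / (4 * delta * T) * real (card {k. grp k = g})"
      unfolding a_def using tau delta T by (simp add: power_mult_distrib power_divide less_imp_le)
    also have "\<dots> \<le> T / (4 * delta * T) * real (card {k. grp k = g})"
      using tau_le_T[of g] delta T by (intro mult_right_mono divide_right_mono) auto
    also have "\<dots> = 1 / (2 * delta) * (real (card {k. grp k = g}) / 2)" using T by simp
    finally show ?thesis
      unfolding sum using delta by (intro psd2I) auto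
  qed
  moreover have "1 / (2 * delta) \<le> rhobar g v Qt Qt + (1 - 1/2) / delta" for g v
    using rhobar_self[OF Qt] rho_nonneg[OF Qt] by simp
  ultimately have "(Qt, (\<lambda>g. 1 / (2 * delta)), s, t, a) \<in> feas_surr P Bs tau grp fb delta h hv Qt"
    using Qt unfolding feas_surr_def feas_def s_def t_def by simp
  moreover have "0 < a" unfolding a_def using delta T by simp
  ultimately show ?thesis by (force simp: obj_def)
qed

lemma eventually_quadratic_below_margin:
  fixes K R dR ax da :: real
  assumes "0 < ax" "0 < da" "0 < R"
  shows "\<forall>\<^sub>F \<tau> in at_right 0. (\<tau> * K)\<^sup>2 / ln 2 < \<tau> * da / (2 * (ax + \<tau> * da)) * (R + \<tau> * dR)"
proof -
  define \<phi> where "\<phi> \<tau> = da * (R + \<tau> * dR) / (2 * (ax + \<tau> * da)) - \<tau> * K\<^sup>2 / ln 2" for \<tau>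
  have "(\<phi> \<longlongrightarrow> da * (R + 0 * dR) / (2 * (ax + 0 * da)) - 0 * K\<^sup>2 / ln 2) (at_right 0)"
    unfolding \<phi>_def using assms by (intro tendsto_intros) auto
  then have "\<forall>\<^sub>F \<tau> in at_right 0. 0 < \<phi> \<tau>"
    by (rule order_tendstoD) (use assms in simp)
  then show ?thesis
    using eventually_at_right_less[of "0::real"]
  proof eventually_elim
    case (elim \<tau>)
    have "0 < ax + \<tau> * da" using assms elim by (simp add: add_pos_pos)
    then have "\<tau> * da / (2 * (ax + \<tau> * da)) * (R + \<tau> * dR) - (\<tau> * K)\<^sup>2 / ln 2 = \<tau> * \<phi> \<tau>"
      unfolding \<phi>_def by (simp add: field_simps power2_eq_square)
    moreover have "0 < \<tau> * \<phi> \<tau>" using elim by simp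
    ultimately show ?case by linarith
  qed
qed

lemma eventually_rate_gap_less:
  assumes Q: "Q \<in> Qset P Bs" and Qt: "\<forall>\<^sub>F n in F. Qt n \<in> Qset P' Bs'"
    and lim: "\<And>l. ((\<lambda>n. Qt n l) \<longlongrightarrow> Qx l) F"
    and less: "(interference Q g v - interference Qx g v)\<^sup>2 / ln 2 < e"
  shows "\<forall>\<^sub>F n in F. rho g v Q - rhobar g v Q (Qt n) < e"
proof -
  have "((\<lambda>n. (interference Q g v - interference (Qt n) g v)\<^sup>2 / ln 2)
      \<longlongrightarrow> (interference Q g v - interference Qx g v)\<^sup>2 / ln 2) F"
    by (intro tendsto_intros interference_tendsto lim) simp
  from order_tendstoD(2)[OF this less] Qt show ?thesis
  proof eventually_elim
    case (elim n)
    then show ?case using rho_minus_rhobar_le[OF Q elim(2), of g v] by linarith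
  qed
qed

lemma ascent_direction_improves_surrogate:
  fixes dt :: "'k::finite \<Rightarrow> 'j::finite \<Rightarrow> real"
  assumes dir: "feasible_direction (feas_RPF P Bs tau grp fb delta h hv)
                  (Qx, Rx, sx, tx, ax) (dQ, dR, ds, dt, da)"
    and ax: "0 < ax" and da: "0 < da" and Rx: "\<And>k. 0 < Rx (grp k)"
    and Qt: "\<forall>\<^sub>F n in F. Qt n \<in> Qset P Bs" and lim: "\<And>g. ((\<lambda>n. Qt n g) \<longlongrightarrow> Qx g) F"
  shows "\<forall>\<^sub>F n in F. \<exists>y \<in> feas_surr P Bs tau grp fb delta h hv (Qt n). ax < obj y"
proof -
  obtain \<epsilon> where "0 < \<epsilon>" and step_feas: "\<And>\<tau>. 0 < \<tau> \<Longrightarrow> \<tau> \<le> \<epsilon> \<Longrightarrow>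
      pstep (Qx, Rx, sx, tx, ax) \<tau> (dQ, dR, ds, dt, da) \<in> feas_RPF P Bs tau grp fb delta h hv"
    using dir unfolding feasible_direction_def by blast
  define margin where "margin \<tau> g K \<longleftrightarrow>
      (\<tau> * K)\<^sup>2 / ln 2 < \<tau> * da / (2 * (ax + \<tau> * da)) * (Rx g + \<tau> * dR g)" for \<tau> g K
  have "\<forall>\<^sub>F \<tau> in at_right 0. 0 < \<tau> \<and> \<tau> < \<epsilon>"
    using eventually_at_right_less order_tendstoD(2)[OF tendsto_ident_at \<open>0 < \<epsilon>\<close>]
    by (rule eventually_conj)
  moreover have "\<forall>\<^sub>F \<tau> in at_right 0. \<forall>k. margin \<tau> (grp k) (interference dQ (grp k) (h k))"
    unfolding margin_def by (intro eventually_all_finite eventually_quadratic_below_margin ax da Rx)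
  moreover have "\<forall>\<^sub>F \<tau> in at_right 0. \<forall>k j. margin \<tau> (grp k) (interference dQ (grp k) (hv k j))"
    unfolding margin_def
    by (intro eventually_all_finite eventually_quadratic_below_margin ax da Rx)
  ultimately have "\<forall>\<^sub>F \<tau> in at_right 0. (0 < \<tau> \<and> \<tau> < \<epsilon>)
      \<and> (\<forall>k. margin \<tau> (grp k) (interference dQ (grp k) (h k)))
      \<and> (\<forall>k j. margin \<tau> (grp k) (interference dQ (grp k) (hv k j)))"
    by eventually_elim blast
  then obtain \<tau> where \<tau>: "0 < \<tau>" "\<tau> < \<epsilon>"
    and margin_fb: "\<And>k. margin \<tau> (grp k) (interference dQ (grp k) (h k))"
    and margin_vir: "\<And>k j. margin \<tau> (grp k) (interference dQ (grp k) (hv k j))"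
    using eventually_happens'[OF trivial_limit_at_right_real] by blast
  define Q' where "Q' = (\<lambda>g. Qx g + \<tau> *\<^sub>R dQ g)"
  define R' where "R' = (\<lambda>g. Rx g + \<tau> * dR g)"
  define A where "A = ax + \<tau> * da"
  \<comment> \<open>the rate margin \<open>(1 - c) * R'\<close> freed by shrinking is what \<open>margin\<close> compares with\<close>
  define c where "c = 1 - \<tau> * da / (2 * A)"
  have feas': "(Q', R', \<lambda>k. sx k + \<tau> * ds k, \<lambda>k j. tx k j + \<tau> * dt k j, A)
      \<in> feas_RPF P Bs tau grp fb delta h hv"
    using step_feas[OF \<tau>(1)] \<tau>(2) unfolding pstep_def Q'_def R'_def A_def by simp
  then have "Q' \<in> Qset P Bs" unfolding feas_RPF_def feas_def by simp
  have "0 < A" unfolding A_def using ax da \<tau> by (simp add: add_pos_pos)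
  have "\<tau> * da \<le> 2 * A" unfolding A_def using ax da \<tau> by simp
  then have c: "0 \<le> c" "c \<le> 1"
    unfolding c_def using \<open>0 < A\<close> da \<tau> by (simp_all add: divide_le_eq_1)
  have "c * A = ax + \<tau> * da / 2"
    unfolding c_def using \<open>0 < A\<close> by (simp add: field_simps A_def)
  then have "ax < c * A" using da \<tau> by simp
  have gap: "\<forall>\<^sub>F n in F. rho (grp k) v Q' - rhobar (grp k) v Q' (Qt n) < (1 - c) * R' (grp k)"
    if "margin \<tau> (grp k) (interference dQ (grp k) v)" for k v
  proof (rule eventually_rate_gap_less[OF \<open>Q' \<in> Qset P Bs\<close> Qt lim])
    show "(interference Q' (grp k) v - interference Qx (grp k) v)\<^sup>2 / ln 2 < (1 - c) * R' (grp k)"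
      using that unfolding margin_def Q'_def R'_def c_def A_def interference_add_scaleR by simp
  qed
  have "\<forall>\<^sub>F n in F. (\<forall>k. rho (grp k) (h k) Q' - rhobar (grp k) (h k) Q' (Qt n) < (1 - c) * R' (grp k))
     \<and> (\<forall>k j. rho (grp k) (hv k j) Q' - rhobar (grp k) (hv k j) Q' (Qt n) < (1 - c) * R' (grp k))"
    using gap margin_fb margin_vir by (auto intro!: eventually_conj eventually_all_finite)
  then show ?thesis
  proof eventually_elim
    case (elim n)
    have "(Q', \<lambda>g. c * R' g, \<lambda>k. sx k + \<tau> * ds k, \<lambda>k j. tx k j + \<tau> * dt k j, c * A)
        \<in> feas_surr P Bs tau grp fb delta h hv (Qt n)"
      unfolding feas_surr_def
      by (rule feas_shrink[OF feas'[unfolded feas_RPF_def] c])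
         (use elim in \<open>auto intro: less_imp_le\<close>)
    with \<open>ax < c * A\<close> show ?case by (force simp: obj_def)
  qed
qed

lemma obj_pstep: "obj (pstep x \<tau> d) = obj x + \<tau> * obj d"
  by (cases x, cases d) (simp add: pstep_def obj_def)

lemma obj_directional_derivative:
  assumes "((\<lambda>\<tau>. (obj (pstep x \<tau> d) - obj x) / \<tau>) \<longlongrightarrow> D) (at_right 0)"
  shows "D = obj d"
proof -
  have "\<forall>\<^sub>F \<tau> in at_right 0. obj d = (obj (pstep x \<tau> d) - obj x) / \<tau>"
    using eventually_at_right_less[of "0::real"] by eventually_elim (simp add: obj_pstep)
  then have "((\<lambda>\<tau>. (obj (pstep x \<tau> d) - obj x) / \<tau>) \<longlongrightarrow> obj d) (at_right 0)"
    by (rule Lim_transform_eventually[OF tendsto_const])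
  then show ?thesis using tendsto_unique[OF trivial_limit_at_right_real assms] by simp
qed

lemma feas_rate_target_pos:
  fixes t :: "'k::finite \<Rightarrow> 'j::finite \<Rightarrow> real"
  assumes feas: "(Q, R, s, t, a) \<in> feas P Bs tau grp fb delta rfb rvir"
    and "0 < a" "0 < tau (grp k)"
  shows "0 < R (grp k)"
proof (rule psd2_offdiag_nonzero_imp_pos)
  show "psd2 (R (grp k)) (a * sqrt (tau (grp k) * real (card {k'. grp k' = grp k})))
      ((\<Sum>k'\<in>{k'\<in>fb. grp k' = grp k}. s k')
       + (1 / real CARD('j)) * (\<Sum>k'\<in>{k'. k' \<notin> fb \<and> grp k' = grp k}. \<Sum>j\<in>UNIV. t k' j))"
    using feas unfolding feas_def by simp
  have "0 < card {k'. grp k' = grp k}" by (auto simp: card_gt_0_iff)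
  then show "a * sqrt (tau (grp k) * real (card {k'. grp k' = grp k})) \<noteq> 0"
    using assms(2,3) by auto
qed

locale surrogate_iteration =
  fixes P :: "'b::finite \<Rightarrow> real" and Bs :: "'g::finite \<Rightarrow> 'b set" and tau :: "'g \<Rightarrow> real"
    and grp :: "'k::finite \<Rightarrow> 'g" and fb :: "'k set" and delta :: real
    and h :: "'k \<Rightarrow> ('m::finite,'b) cvec" and hv :: "'k \<Rightarrow> 'j::finite \<Rightarrow> ('m,'b) cvec"
    and Qt0 :: "'g \<Rightarrow> ('m,'b) cmat" and z :: "nat \<Rightarrow> ('g,'m,'b,'k,'j) pt"
  assumes tau_pos: "\<forall>g. 0 < tau g" and delta_pos: "0 < delta" and init: "Qt0 \<in> Qset P Bs"
    and iter: "\<forall>n. optimal_in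
                 (feas_surr P Bs tau grp fb delta h hv (if n = 0 then Qt0 else fst (z (n - 1))))
                 (z n)"
begin

abbreviation "RPF \<equiv> feas_RPF P Bs tau grp fb delta h hv"
abbreviation "surr \<equiv> feas_surr P Bs tau grp fb delta h hv"

lemma iterate_optimal_Suc: "optimal_in (surr (fst (z n))) (z (Suc n))"
  using iter[rule_format, of "Suc n"] by simp

lemma iterate_in_Qset: "fst (z n) \<in> Qset P Bs"
  using iter[rule_format, of n] unfolding optimal_in_def feas_surr_def by (blast intro: feas_fst_in_Qset)

lemma iterate_feasible: "z n \<in> RPF"
proof -
  define Qt where "Qt = (if n = 0 then Qt0 else fst (z (n - 1)))"
  have "Qt \<in> Qset P Bs" unfolding Qt_def using init iterate_in_Qset by simp
  moreover have "z n \<in> surr Qt" using iter unfolding Qt_def optimal_in_def by blast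
  ultimately show ?thesis
    using rhobar_le_rho[OF iterate_in_Qset[of n]] unfolding feas_surr_def feas_RPF_def
    by (cases "z n") (auto intro: feas_mono_rates)
qed

lemma iterate_in_next_surrogate: "z n \<in> surr (fst (z n))"
  using iterate_feasible[of n] rhobar_self[OF iterate_in_Qset[of n]]
  unfolding feas_surr_def feas_RPF_def by (cases "z n") (auto intro: feas_mono_rates)

lemma obj_iterate_incseq: "incseq (\<lambda>n. obj (z n))"
  using iterate_optimal_Suc iterate_in_next_surrogate by (intro incseq_SucI) (auto simp: optimal_in_def)

lemma obj_iterate_pos: "0 < obj (z n)"
proof -
  obtain p where "p \<in> surr Qt0" "0 < obj p"
    using feas_surr_has_positive_point[OF init tau_pos delta_pos] by blast
  then have "0 < obj (z 0)" using iter[rule_format, of 0] unfolding optimal_in_def by fastforce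
  moreover have "obj (z 0) \<le> obj (z n)" using obj_iterate_incseq by (simp add: incseq_def)
  ultimately show ?thesis by linarith
qed

lemma obj_iterate_le_limit_point:
  assumes "limit_point z x"
  shows "obj (z n) \<le> obj x"
proof -
  obtain \<sigma> where \<sigma>: "strict_mono \<sigma>" "(z \<circ> \<sigma>) \<longlonglongrightarrow> x"
    using assms unfolding limit_point_def by blast
  have "incseq (\<lambda>n. obj (z (\<sigma> n)))"
    using obj_iterate_incseq strict_mono_mono[OF \<sigma>(1)] by (auto simp: incseq_def mono_def)
  moreover have "(\<lambda>n. obj (z (\<sigma> n))) \<longlonglongrightarrow> obj x"
    using \<sigma>(2) unfolding obj_def comp_def by (intro tendsto_intros)
  ultimately have "obj (z (\<sigma> n)) \<le> obj x" by (rule incseq_le)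
  moreover have "obj (z n) \<le> obj (z (\<sigma> n))"
    using obj_iterate_incseq seq_suble[OF \<sigma>(1)] by (simp add: incseq_def)
  ultimately show ?thesis by linarith
qed

lemma limit_point_feasible:
  assumes "limit_point z x"
  shows "x \<in> RPF"
proof -
  obtain \<sigma> where "(z \<circ> \<sigma>) \<longlonglongrightarrow> x"
    using assms unfolding limit_point_def by blast
  then show ?thesis
    by (rule feas_RPF_closed[rotated]) (simp_all add: iterate_feasible)
qed

lemma limit_point_stationary:
  assumes lim: "limit_point z x"
  shows "stationary RPF x"
  unfolding stationary_def
proof (intro conjI notI)
  show x_feas: "x \<in> RPF" by (rule limit_point_feasible[OF lim])
  assume "\<exists>d D. feasible_direction RPF x d
            \<and> ((\<lambda>\<tau>. (obj (pstep x \<tau> d) - obj x) / \<tau>) \<longlongrightarrow> D) (at_right 0) \<and> D > 0"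
  then obtain d D where dir: "feasible_direction RPF x d" and "0 < D"
    and "((\<lambda>\<tau>. (obj (pstep x \<tau> d) - obj x) / \<tau>) \<longlongrightarrow> D) (at_right 0)"
    by blast
  then have "0 < obj d" using obj_directional_derivative by blast
  obtain Qx Rx sx tx ax where x: "x = (Qx, Rx, sx, tx, ax)" by (cases x)
  obtain dQ dR ds dt da where d: "d = (dQ, dR, ds, dt, da)" by (cases d)
  have "0 < ax" using obj_iterate_pos[of 0] obj_iterate_le_limit_point[OF lim, of 0]
    unfolding x obj_def by simp
  have Rx: "0 < Rx (grp k)" for k
    using x_feas \<open>0 < ax\<close> tau_pos unfolding x feas_RPF_def by (blast intro: feas_rate_target_pos)
  obtain \<sigma> where "(z \<circ> \<sigma>) \<longlonglongrightarrow> x"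
    using lim unfolding limit_point_def by blast
  then have Q_lim: "(\<lambda>n. fst (z (\<sigma> n)) g) \<longlonglongrightarrow> Qx g" for g
    using tendsto_pt_components(1)[of "z \<circ> \<sigma>"] unfolding x by simp
  have "0 < da" using \<open>0 < obj d\<close> unfolding d obj_def by simp
  have "\<forall>\<^sub>F n in sequentially. \<exists>y \<in> surr (fst (z (\<sigma> n))). ax < obj y"
    by (rule ascent_direction_improves_surrogate[OF dir[unfolded x d] \<open>0 < ax\<close> \<open>0 < da\<close> Rx _ Q_lim])
       (simp add: iterate_in_Qset)
  then obtain n y where "y \<in> surr (fst (z (\<sigma> n)))" "ax < obj y"
    using eventually_happens'[OF sequentially_bot] by blast
  then have "ax < obj (z (Suc (\<sigma> n)))"
    using iterate_optimal_Suc[of "\<sigma> n"] unfolding optimal_in_def by fastforce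
  then show False
    using obj_iterate_le_limit_point[OF lim, of "Suc (\<sigma> n)"] unfolding x obj_def by simp
qed

end

theorem proposition2:
  fixes P :: "'b::finite \<Rightarrow> real"
    and Bs :: "'g::finite \<Rightarrow> 'b set"
    and tau :: "'g \<Rightarrow> real"
    and grp :: "'k::finite \<Rightarrow> 'g"
    and fb :: "'k set"
    and delta :: real
    and h :: "'k \<Rightarrow> ('m::finite,'b) cvec"
    and hv :: "'k \<Rightarrow> 'j::finite \<Rightarrow> ('m,'b) cvec"
    and Qt0 :: "'g \<Rightarrow> ('m,'b) cmat"
    and z :: "nat \<Rightarrow> ('g,'m,'b,'k,'j) pt"
    and x :: "('g,'m,'b,'k,'j) pt"
  assumes P_nonneg: "\<forall>b. 0 \<le> P b"
    and tau_pos: "\<forall>g. 0 < tau g"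
    and delta_pos: "0 < delta"
    and init: "Qt0 \<in> Qset P Bs"
    and iter: "\<forall>n. optimal_in
                 (feas_surr P Bs tau grp fb delta h hv
                    (if n = 0 then Qt0 else fst (z (n - 1))))
                 (z n)"
    and lim: "limit_point z x"
  shows "stationary (feas_RPF P Bs tau grp fb delta h hv) x"
proof -
  interpret surrogate_iteration P Bs tau grp fb delta h hv Qt0 z
    using tau_pos delta_pos init iter by unfold_locales
  show ?thesis by (rule limit_point_stationary[OF lim])
qed

end
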